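(* Let $(W,S)$ be a Coxeter system, $x\in S$, $O=S^{\mathrm{odd}}_{\sim x}$ and $E=\{s\in S\smallsetminus O\mid m_{y,s}<\infty \text{ for some } y\in O\}$. If $R_S^x\smallsetminus R_O^x$ is finite, then $E$ is finite.
   Context: $(W,S)$ is a Coxeter system, $S$ possibly infinite; $m_{s,t}$ is the order of $st$ ($m_{s,s}=1$). For $I\subseteq S$, $\Gamma^{\mathrm{odd}}_I$ has vertex set $I$, distinct $s,t$ joined iff $m_{s,t}$ is odd ($\ge3$); $S^{\mathrm{odd}}_{\sim x}$ is the vertex set of the component of $\Gamma^{\mathrm{odd}}_S$ containing $x$. Geometric representation: $V$ has basis $\{\alpha_s\}$ with $\langle\alpha_s,\alpha_t\rangle=-\cos(\pi/m_{s,t})$ ($-1$ if $\infty$); $W$ acts by $s\cdot v=v-2\langle\alpha_s,v\rangle\alpha_s$; $\Phi=W\cdot\{\alpha_s\}$, $\Phi^+$ the roots with all coefficients $\ge0$; for $\gamma=w\cdot\alpha_s$, $s_\gamma=wsw^{-1}$; $\Phi_I=\Phi\cap\mathrm{span}\{\alpha_s:s\in I\}$. For $x\in I\subseteq S$, $\Phi_I^{\perp x}=\{\gamma\in\Phi_I:\langle\gamma,\alpha_x\rangle=0\}$; $\Pi_I^x$ is the set of $\gamma\in\Phi_I^{\perp x}\cap\Phi^+$ which are not positive linear combinations of at least two elements of $\Phi_I^{\perp x}\cap\Phi^+$; and $R_I^x=\{s_\gamma:\gamma\in\Pi_I^x\}$ (the Coxeter generating set of the reflection subgroup $W_I^{\perp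 x}$ generated by $\{s_\gamma:\gamma\in\Phi_I^{\perp x}\}$). *)

theory Defs
  imports Complex_Main "HOL-Library.Extended_Nat"
begin

text \<open>A Coxeter system (W,S) is determined by its Coxeter matrix. We take S to be the
  whole type 'a, and m s t \<in> {1,2,...} \<union> {\<infinity>} the order of st.\<close>

definition coxeter_matrix :: "('a \<Rightarrow> 'a \<Rightarrow> enat) \<Rightarrow> bool" where
  "coxeter_matrix m \<longleftrightarrow>
     (\<forall>s. m s s = 1) \<and> (\<forall>s t. m s t = m t s) \<and> (\<forall>s t. s \<noteq> t \<longrightarrow> m s t \<ge> 2)"

text \<open>Vectors of V are finitely supported functions 'a \<Rightarrow> real (coefficients w.r.t. the basis alpha).\<close>

definition supp :: "('a \<Rightarrow> real) \<Rightarrow> 'a set" where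
  "supp v = {s. v s \<noteq> 0}"

definition alpha :: "'a \<Rightarrow> 'a \<Rightarrow> real" where
  "alpha s = (\<lambda>t. if t = s then 1 else 0)"

definition bil_coeff :: "('a \<Rightarrow> 'a \<Rightarrow> enat) \<Rightarrow> 'a \<Rightarrow> 'a \<Rightarrow> real" where
  "bil_coeff m s t = (case m s t of enat k \<Rightarrow> - cos (pi / real k) | \<infinity> \<Rightarrow> -1)"

definition bform :: "('a \<Rightarrow> 'a \<Rightarrow> enat) \<Rightarrow> ('a \<Rightarrow> real) \<Rightarrow> ('a \<Rightarrow> real) \<Rightarrow> real" where
  "bform m u v = (\<Sum>s\<in>supp u. \<Sum>t\<in>supp v. u s * v t * bil_coeff m s t)"

text \<open>For gamma = alpha s this is the action of s;
  for a root gamma = w alpha s it is the action of s_gamma = w s w^-1 in the (faithful)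
  geometric representation.\<close>

definition refl :: "('a \<Rightarrow> 'a \<Rightarrow> enat) \<Rightarrow> ('a \<Rightarrow> real) \<Rightarrow> ('a \<Rightarrow> real) \<Rightarrow> ('a \<Rightarrow> real)" where
  "refl m \<gamma> v = (\<lambda>t. v t - 2 * bform m \<gamma> v * \<gamma> t)"

text \<open>Phi = W . {alpha s}; W is generated by the simple reflections.\<close>

inductive_set roots :: "('a \<Rightarrow> 'a \<Rightarrow> enat) \<Rightarrow> ('a \<Rightarrow> real) set" for m where
  simple: "alpha s \<in> roots m"
| step: "\<gamma> \<in> roots m \<Longrightarrow> refl m (alpha s) \<gamma> \<in> roots m"

definition pos_roots :: "('a \<Rightarrow> 'a \<Rightarrow> enat) \<Rightarrow> ('a \<Rightarrow> real) set" where
  "pos_roots m = {\<gamma> \<in> roots m. \<forall>s. \<gamma> s \<ge> 0}"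

definition roots_on :: "('a \<Rightarrow> 'a \<Rightarrow> enat) \<Rightarrow> 'a set \<Rightarrow> ('a \<Rightarrow> real) set" where
  "roots_on m I = {\<gamma> \<in> roots m. supp \<gamma> \<subseteq> I}"

definition perp_roots :: "('a \<Rightarrow> 'a \<Rightarrow> enat) \<Rightarrow> 'a set \<Rightarrow> 'a \<Rightarrow> ('a \<Rightarrow> real) set" where
  "perp_roots m I x = {\<gamma> \<in> roots_on m I. bform m \<gamma> (alpha x) = 0}"

definition pos_comb_of_two :: "('a \<Rightarrow> real) set \<Rightarrow> ('a \<Rightarrow> real) \<Rightarrow> bool" where
  "pos_comb_of_two P \<gamma> \<longleftrightarrow>
     (\<exists>F c. finite F \<and> F \<subseteq> P \<and> card F \<ge> 2 \<and> (\<forall>\<beta>\<in>F. c \<beta> > (0::real)) \<and>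
            \<gamma> = (\<lambda>t. \<Sum>\<beta>\<in>F. c \<beta> * \<beta> t))"

definition Pi_perp :: "('a \<Rightarrow> 'a \<Rightarrow> enat) \<Rightarrow> 'a set \<Rightarrow> 'a \<Rightarrow> ('a \<Rightarrow> real) set" where
  "Pi_perp m I x =
     {\<gamma> \<in> perp_roots m I x \<inter> pos_roots m.
        \<not> pos_comb_of_two (perp_roots m I x \<inter> pos_roots m) \<gamma>}"

definition R_perp :: "('a \<Rightarrow> 'a \<Rightarrow> enat) \<Rightarrow> 'a set \<Rightarrow> 'a \<Rightarrow> (('a \<Rightarrow> real) \<Rightarrow> ('a \<Rightarrow> real)) set" where
  "R_perp m I x = refl m ` Pi_perp m I x"

definition odd_edge :: "('a \<Rightarrow> 'a \<Rightarrow> enat) \<Rightarrow> 'a \<Rightarrow> 'a \<Rightarrow> bool" where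
  "odd_edge m s t \<longleftrightarrow> s \<noteq> t \<and> (\<exists>k. m s t = enat k \<and> odd k \<and> k \<ge> 3)"

definition odd_component :: "('a \<Rightarrow> 'a \<Rightarrow> enat) \<Rightarrow> 'a \<Rightarrow> 'a set" where
  "odd_component m x = {s. (odd_edge m)\<^sup>*\<^sup>* x s}"

end

theory Submission
  imports Defs
begin

text \<open>Let \<open>O\<close> be the odd component of \<open>x\<close> and let \<open>s \<notin> O\<close> with \<open>m y s < \<infinity>\<close> for some \<open>y \<in> O\<close>.
  Then \<open>m y s\<close> is even (otherwise \<open>s \<in> O\<close>), and the dihedral root system of \<open>{y, s}\<close> contains
  exactly one positive root \<open>\<beta>\<close> orthogonal to \<open>alpha y\<close>; its \<open>alpha s\<close>-coefficient is positive.
  A path of odd edges from \<open>x\<close> to \<open>y\<close> gives a word \<open>w\<close> in the letters of \<open>O\<close> that maps \<open>alpha x\<close> to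
  \<open>alpha y\<close> and the positive roots orthogonal to \<open>alpha x\<close> onto those orthogonal to \<open>alpha y\<close>
  (positivity is preserved because every root is positive or negative). So \<open>\<gamma> = w\<^sup>-\<^sup>1 \<beta>\<close> is a
  positive root orthogonal to \<open>alpha x\<close> with \<open>\<gamma> s = \<beta> s > 0\<close>, and it lies in \<open>Pi_perp m UNIV x\<close>, since by
  uniqueness of \<open>\<beta>\<close> it is no positive combination of other such roots.
  A reflection determines the support of its root, so \<open>refl m \<gamma>\<close> lies in \<open>R_perp m UNIV x\<close> but not in
  \<open>R_perp m O x\<close>, whose roots are supported in \<open>O\<close>. Hence the supports of the roots of the finitely
  many reflections in the difference cover all such \<open>s\<close>.\<close>

section \<open>The bilinear form and reflections\<close>

lemma supp_alpha [simp]: "supp (alpha s) = {s}"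
  by (auto simp: supp_def alpha_def)

lemma alpha_same [simp]: "alpha s s = 1"
  and alpha_other [simp]: "t \<noteq> s \<Longrightarrow> alpha s t = 0"
  by (simp_all add: alpha_def)

lemma supp_lin_comb: "supp (\<lambda>t. a * u t + b * v t) \<subseteq> supp u \<union> supp v"
  by (auto simp: supp_def)

lemma supp_sum_comb: "supp (\<lambda>t. \<Sum>i\<in>I. k i * g i t) \<subseteq> (\<Union>i\<in>I. supp (g i))"
proof
  fix t assume "t \<in> supp (\<lambda>t. \<Sum>i\<in>I. k i * g i t)"
  then obtain i where "i \<in> I" "k i * g i t \<noteq> 0"
    unfolding supp_def by (auto elim: sum.not_neutral_contains_not_neutral)
  then show "t \<in> (\<Union>i\<in>I. supp (g i))" by (auto simp: supp_def)
qed

lemma supp_refl: "supp (refl m \<gamma> v) \<subseteq> supp v \<union> supp \<gamma>"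
  by (auto simp: supp_def refl_def)

lemma refl_apply_outside: "\<gamma> t = 0 \<Longrightarrow> refl m \<gamma> v t = v t"
  by (simp add: refl_def)

lemma refl_infinite_supp: "infinite (supp v) \<Longrightarrow> refl m \<gamma> v = v"
  by (simp add: refl_def bform_def)

lemma bform_eq_sum_left:
  assumes "finite A" "supp u \<subseteq> A"
  shows "bform m u v = (\<Sum>s\<in>A. u s * bform m (alpha s) v)"
proof -
  have "bform m u v = (\<Sum>s\<in>supp u. u s * bform m (alpha s) v)"
    by (simp add: bform_def sum_distrib_left mult.assoc)
  also have "\<dots> = (\<Sum>s\<in>A. u s * bform m (alpha s) v)"
    by (rule sum.mono_neutral_left) (use assms in \<open>auto simp: supp_def\<close>)
  finally show ?thesis .
qed

lemma bform_alpha_eq_sum: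
  assumes "finite A" "supp v \<subseteq> A"
  shows "bform m (alpha c) v = (\<Sum>t\<in>A. v t * bil_coeff m c t)"
proof -
  have "bform m (alpha c) v = (\<Sum>t\<in>supp v. v t * bil_coeff m c t)"
    by (simp add: bform_def)
  also have "\<dots> = (\<Sum>t\<in>A. v t * bil_coeff m c t)"
    by (rule sum.mono_neutral_left) (use assms in \<open>auto simp: supp_def\<close>)
  finally show ?thesis .
qed

lemma bform_alpha_alpha [simp]: "bform m (alpha s) (alpha t) = bil_coeff m s t"
  by (simp add: bform_def)

lemma bform_sum_left:
  assumes "finite I" "\<And>i. i \<in> I \<Longrightarrow> finite (supp (g i))"
  shows "bform m (\<lambda>t. \<Sum>i\<in>I. k i * g i t) v = (\<Sum>i\<in>I. k i * bform m (g i) v)"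
proof -
  let ?A = "\<Union>i\<in>I. supp (g i)"
  have A: "finite ?A" using assms by blast
  have "bform m (\<lambda>t. \<Sum>i\<in>I. k i * g i t) v = (\<Sum>s\<in>?A. \<Sum>i\<in>I. k i * (g i s * bform m (alpha s) v))"
    by (simp add: bform_eq_sum_left[OF A supp_sum_comb] sum_distrib_right mult.assoc)
  also have "\<dots> = (\<Sum>i\<in>I. k i * (\<Sum>s\<in>?A. g i s * bform m (alpha s) v))"
    by (subst sum.swap) (simp add: sum_distrib_left)
  also have "\<dots> = (\<Sum>i\<in>I. k i * bform m (g i) v)"
    by (intro sum.cong refl arg_cong[where f = "(*) _"] bform_eq_sum_left[symmetric] A) auto
  finally show ?thesis .
qed

lemma bform_lin_left:
  assumes "finite (supp u)" "finite (supp v)"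
  shows "bform m (\<lambda>t. a * u t + b * v t) w = a * bform m u w + b * bform m v w"
proof -
  let ?A = "supp u \<union> supp v"
  have A: "finite ?A" using assms by simp
  show ?thesis
    by (simp add: bform_eq_sum_left[OF A supp_lin_comb] bform_eq_sum_left[OF A, of u]
        bform_eq_sum_left[OF A, of v] sum.distrib sum_distrib_left algebra_simps)
qed

locale coxeter =
  fixes m :: "'a \<Rightarrow> 'a \<Rightarrow> enat"
  assumes coxeter_matrix: "coxeter_matrix m"
begin

lemma m_sym: "m a b = m b a"
  using coxeter_matrix by (simp add: coxeter_matrix_def)

lemma bil_coeff_sym: "bil_coeff m s t = bil_coeff m t s"
  by (simp add: bil_coeff_def m_sym)

lemma bil_coeff_diag [simp]: "bil_coeff m s s = 1"
  using coxeter_matrix by (simp add: bil_coeff_def coxeter_matrix_def one_enat_def)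

lemma bform_sym: "bform m u v = bform m v u"
  unfolding bform_def by (subst sum.swap) (simp add: bil_coeff_sym mult_ac)

lemma bform_lin_right:
  assumes "finite (supp u)" "finite (supp v)"
  shows "bform m w (\<lambda>t. a * u t + b * v t) = a * bform m w u + b * bform m w v"
  using bform_lin_left[OF assms] by (simp add: bform_sym[of w])

lemma bform_sum_right:
  assumes "finite I" "\<And>i. i \<in> I \<Longrightarrow> finite (supp (g i))"
  shows "bform m v (\<lambda>t. \<Sum>i\<in>I. k i * g i t) = (\<Sum>i\<in>I. k i * bform m v (g i))"
  using bform_sum_left[OF assms] by (simp add: bform_sym[of v])

lemma bform_refl_left:
  assumes "finite (supp \<gamma>)" "finite (supp u)"
  shows "bform m (refl m \<gamma> u) w = bform m u w - 2 * bform m \<gamma> u * bform m \<gamma> w"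
  using bform_lin_left[OF assms(2,1), where m = m and a = 1 and b = "- 2 * bform m \<gamma> u" and w = w]
  by (simp add: refl_def)

lemma refl_refl:
  assumes "finite (supp \<gamma>)" "bform m \<gamma> \<gamma> = 1"
  shows "refl m \<gamma> (refl m \<gamma> v) = v"
proof (cases "finite (supp v)")
  case True
  have "bform m \<gamma> (refl m \<gamma> v) = - bform m \<gamma> v"
    using bform_refl_left[OF assms(1) True, of \<gamma>] assms(2) by (simp add: bform_sym)
  then show ?thesis by (simp add: refl_def)
qed (simp add: refl_infinite_supp)

lemma bform_refl:
  assumes "finite (supp \<gamma>)" "bform m \<gamma> \<gamma> = 1" "finite (supp u)" "finite (supp v)"
  shows "bform m (refl m \<gamma> u) (refl m \<gamma> v) = bform m u v"
proof -
  have "bform m \<gamma> (refl m \<gamma> v) = - bform m \<gamma> v"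
    using bform_refl_left[OF assms(1,4), of \<gamma>] assms(2) by (simp add: bform_sym)
  moreover have "bform m u (refl m \<gamma> v) = bform m u v - 2 * bform m \<gamma> v * bform m \<gamma> u"
    using bform_refl_left[OF assms(1,4), of u] by (simp add: bform_sym)
  ultimately show ?thesis
    by (simp add: bform_refl_left[OF assms(1,3)] bform_sym[of \<gamma> u])
qed

lemma refl_lin:
  assumes "finite (supp u)" "finite (supp v)"
  shows "refl m \<gamma> (\<lambda>t. a * u t + b * v t) = (\<lambda>t. a * refl m \<gamma> u t + b * refl m \<gamma> v t)"
  using assms by (simp add: refl_def bform_lin_right algebra_simps)

lemma refl_sum:
  assumes "finite I" "\<And>i. i \<in> I \<Longrightarrow> finite (supp (g i))"
  shows "refl m \<gamma> (\<lambda>t. \<Sum>i\<in>I. k i * g i t) = (\<lambda>t. \<Sum>i\<in>I. k i * refl m \<gamma> (g i) t)"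
  by (simp add: refl_def bform_sum_right[OF assms] sum_subtractf sum_distrib_left
      sum_distrib_right right_diff_distrib mult_ac)

abbreviation srefl :: "'a \<Rightarrow> ('a \<Rightarrow> real) \<Rightarrow> ('a \<Rightarrow> real)" where
  "srefl c \<equiv> refl m (alpha c)"

lemma srefl_srefl [simp]: "srefl c (srefl c v) = v"
  by (simp add: refl_refl)

lemma srefl_alpha_self: "srefl c (alpha c) = (\<lambda>t. - alpha c t)"
  by (simp add: refl_def)

fun act :: "'a list \<Rightarrow> ('a \<Rightarrow> real) \<Rightarrow> ('a \<Rightarrow> real)" where
  "act [] = id"
| "act (c # ws) = srefl c \<circ> act ws"

lemma act_append [simp]: "act (xs @ ys) = act xs \<circ> act ys"
  by (induction xs) auto

lemma act_snoc: "act (ws @ [c]) = act ws \<circ> srefl c"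
  by simp

lemma act_snoc_srefl: "act (ws @ [c]) \<circ> srefl c = act ws"
  by (rule ext) simp

lemma act_rev_act [simp]: "act (rev ws) (act ws v) = v"
  by (induction ws arbitrary: v) auto

lemma act_act_rev [simp]: "act ws (act (rev ws) v) = v"
  using act_rev_act[of "rev ws"] by simp

lemma act_inj: "act ws u = act ws v \<Longrightarrow> u = v"
  by (metis act_rev_act)

lemma finite_supp_act [simp]: "finite (supp v) \<Longrightarrow> finite (supp (act ws v))"
  by (induction ws) (auto intro: finite_subset[OF supp_refl])

lemma act_apply_outside: "t \<notin> set ws \<Longrightarrow> act ws v t = v t"
  by (induction ws) (auto simp: refl_apply_outside)

lemma bform_act:
  "finite (supp u) \<Longrightarrow> finite (supp v) \<Longrightarrow> bform m (act ws u) (act ws v) = bform m u v"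
  by (induction ws) (auto simp: bform_refl)

lemma act_lin:
  "finite (supp u) \<Longrightarrow> finite (supp v) \<Longrightarrow>
    act ws (\<lambda>t. a * u t + b * v t) = (\<lambda>t. a * act ws u t + b * act ws v t)"
  by (induction ws) (auto simp: refl_lin)

lemma act_uminus: "finite (supp v) \<Longrightarrow> act ws (\<lambda>t. - v t) = (\<lambda>t. - act ws v t)"
  using act_lin[of v v ws "-1" 0] by simp

lemma act_sum:
  "finite I \<Longrightarrow> (\<And>i. i \<in> I \<Longrightarrow> finite (supp (g i))) \<Longrightarrow>
    act ws (\<lambda>t. \<Sum>i\<in>I. k i * g i t) = (\<lambda>t. \<Sum>i\<in>I. k i * act ws (g i) t)"
  by (induction ws) (auto simp: refl_sum)

lemma roots_iff_act: "\<gamma> \<in> roots m \<longleftrightarrow> (\<exists>ws s. \<gamma> = act ws (alpha s))"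
proof
  show "\<gamma> \<in> roots m \<Longrightarrow> \<exists>ws s. \<gamma> = act ws (alpha s)"
  proof (induction rule: roots.induct)
    case (simple s)
    show ?case by (intro exI[of _ "[]"] exI[of _ s]) simp
  next
    case (step \<gamma> s)
    then obtain ws t where "\<gamma> = act ws (alpha t)" by blast
    then have "srefl s \<gamma> = act (s # ws) (alpha t)" by simp
    then show ?case by blast
  qed
  have "act ws (alpha s) \<in> roots m" for ws s
    by (induction ws) (auto intro: roots.intros)
  then show "\<exists>ws s. \<gamma> = act ws (alpha s) \<Longrightarrow> \<gamma> \<in> roots m" by blast
qed

lemma act_root: "\<gamma> \<in> roots m \<Longrightarrow> act ws \<gamma> \<in> roots m"
  by (induction ws) (auto intro: roots.step)

lemma finite_supp_root: "\<gamma> \<in> roots m \<Longrightarrow> finite (supp \<gamma>)"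
  by (auto simp: roots_iff_act)

lemma bform_root_self: "\<gamma> \<in> roots m \<Longrightarrow> bform m \<gamma> \<gamma> = 1"
  by (auto simp: roots_iff_act bform_act)

lemma refl_root_self: "\<gamma> \<in> roots m \<Longrightarrow> refl m \<gamma> \<gamma> = (\<lambda>t. - \<gamma> t)"
  by (simp add: refl_def bform_root_self)

text \<open>If \<open>\<gamma> s \<noteq> 0\<close> but \<open>\<gamma>' s = 0\<close>, then \<open>refl m \<gamma>'\<close> fixes the \<open>s\<close>-coordinate of \<open>\<gamma>\<close>
  while \<open>refl m \<gamma>\<close> negates it.\<close>

lemma supp_root_subset_if_refl_eq:
  assumes "\<gamma> \<in> roots m" "refl m \<gamma>' = refl m \<gamma>"
  shows "supp \<gamma> \<subseteq> supp \<gamma>'"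
proof
  fix s assume "s \<in> supp \<gamma>"
  moreover have "refl m \<gamma>' \<gamma> s = - \<gamma> s"
    using assms by (simp add: refl_root_self)
  ultimately show "s \<in> supp \<gamma>'"
    by (auto simp: supp_def refl_apply_outside)
qed

end

section \<open>Dihedral reflection subgroups\<close>

text \<open>\<open>cheb c n\<close> is the Chebyshev polynomial of the second kind \<open>U\<^sub>n\<^sub>-\<^sub>1\<close> (note the index shift)
  evaluated at \<open>c\<close>.\<close>

fun cheb :: "real \<Rightarrow> nat \<Rightarrow> real" where
  "cheb c 0 = 0"
| "cheb c (Suc 0) = 1"
| "cheb c (Suc (Suc n)) = 2 * c * cheb c (Suc n) - cheb c n"

lemma cheb_one: "cheb 1 n = real n"
  by (induction "1::real" n rule: cheb.induct) auto

lemma cheb_cos_mult_sin: "cheb (cos \<theta>) n * sin \<theta> = sin (real n * \<theta>)"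
proof (induction "cos \<theta>" n rule: cheb.induct)
  case (3 n)
  have "real (Suc (Suc n)) * \<theta> = real (Suc n) * \<theta> + \<theta>" "real n * \<theta> = real (Suc n) * \<theta> - \<theta>"
    by (simp_all add: algebra_simps)
  moreover have "cheb (cos \<theta>) (Suc (Suc n)) * sin \<theta>
      = 2 * cos \<theta> * sin (real (Suc n) * \<theta>) - sin (real n * \<theta>)"
    using 3 by (simp add: algebra_simps)
  ultimately show ?case by (simp only: sin_add sin_diff) (simp add: algebra_simps)
qed simp_all

lemma cheb_cos_perp:
  assumes "sin \<theta> \<noteq> 0"
  shows "cheb (cos \<theta>) n - cos \<theta> * cheb (cos \<theta>) (Suc n) = - cos (real (Suc n) * \<theta>)"
proof -
  have e: "real n * \<theta> = real (Suc n) * \<theta> - \<theta>" by (simp add: algebra_simps)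
  have "(cheb (cos \<theta>) n - cos \<theta> * cheb (cos \<theta>) (Suc n)) * sin \<theta>
      = sin (real n * \<theta>) - cos \<theta> * sin (real (Suc n) * \<theta>)"
    using cheb_cos_mult_sin[of \<theta> n] cheb_cos_mult_sin[of \<theta> "Suc n"] by (simp add: algebra_simps)
  also have "\<dots> = - cos (real (Suc n) * \<theta>) * sin \<theta>"
    unfolding e sin_diff by (simp add: algebra_simps)
  finally show ?thesis using assms by (metis mult_cancel_right)
qed

lemma cheb_cos_pi_div_nonneg:
  assumes "2 \<le> K" "n \<le> (K::nat)"
  shows "0 \<le> cheb (cos (pi / K)) n"
proof -
  have "0 < sin (pi / K)" using assms by (intro sin_gt_zero) (simp_all add: field_simps)
  moreover have "0 \<le> sin (real n * (pi / K))" using assms by (intro sin_ge_zero) (simp_all add: field_simps)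
  ultimately show ?thesis
    using cheb_cos_mult_sin[of "pi / K" n] by (metis zero_le_mult_iff not_less)
qed

lemma cheb_cos_pi_div:
  assumes "2 \<le> (K::nat)"
  shows "cheb (cos (pi / K)) K = 0" "cheb (cos (pi / K)) (Suc K) = -1"
    "cheb (cos (pi / K)) (K - 1) = 1"
proof -
  have s: "0 < sin (pi / K)" using assms by (intro sin_gt_zero) (simp_all add: field_simps)
  have "real K * (pi / K) = pi" "real (Suc K) * (pi / K) = pi + pi / K"
    "real (K - 1) * (pi / K) = pi - pi / K"
    using assms by (simp_all add: field_simps of_nat_diff)
  then have "cheb (cos (pi / K)) K * sin (pi / K) = 0 * sin (pi / K)"
    "cheb (cos (pi / K)) (Suc K) * sin (pi / K) = -1 * sin (pi / K)"
    "cheb (cos (pi / K)) (K - 1) * sin (pi / K) = 1 * sin (pi / K)"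
    by (simp_all only: cheb_cos_mult_sin) (simp_all add: sin_add sin_diff)
  with s show "cheb (cos (pi / K)) K = 0" "cheb (cos (pi / K)) (Suc K) = -1"
    "cheb (cos (pi / K)) (K - 1) = 1"
    by (simp_all only: mult_cancel_right) simp_all
qed

text \<open>\<open>alt_word a b n\<close> is the alternating word \<open>\<dots>abab\<close> of length \<open>n\<close> ending in \<open>b\<close>.\<close>

fun alt_word :: "'a \<Rightarrow> 'a \<Rightarrow> nat \<Rightarrow> 'a list" where
  "alt_word a b 0 = []"
| "alt_word a b (Suc n) = (if even n then b else a) # alt_word a b n"

lemma set_alt_word: "set (alt_word a b n) \<subseteq> {a, b}"
  by (induction n) auto

lemma length_alt_word [simp]: "length (alt_word a b n) = n"
  by (induction n) auto

lemma alt_word_Suc_snoc: "alt_word a b (Suc n) = alt_word b a n @ [b]"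
  by (induction n) auto

lemma rev_alt_word: "rev (alt_word a b n) = (if even n then alt_word b a n else alt_word a b n)"
proof (induction n arbitrary: a b)
  case (Suc n)
  have "rev (alt_word a b (Suc n)) = b # rev (alt_word b a n)"
    unfolding alt_word_Suc_snoc by simp
  with Suc show ?case by auto
qed simp

lemma drop_alt_word: "drop j (alt_word a b (j + n)) = alt_word a b n"
  by (induction j) auto

context coxeter
begin

definition cos_m :: "'a \<Rightarrow> 'a \<Rightarrow> real" where
  "cos_m a b = - bil_coeff m a b"

lemma cos_m_sym: "cos_m a b = cos_m b a"
  by (simp add: cos_m_def bil_coeff_sym)

lemma cos_m_infinity: "m a b = \<infinity> \<Longrightarrow> cos_m a b = 1"
  by (simp add: cos_m_def bil_coeff_def)

lemma dihedral_order_enat: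
  assumes "a \<noteq> b" "m a b = enat K"
  shows "2 \<le> K" "cos_m a b = cos (pi / K)" "0 \<le> cos_m a b" "cos_m a b < 1" "0 < sin (pi / K)"
proof -
  have "2 \<le> m a b" using assms(1) coxeter_matrix by (simp add: coxeter_matrix_def)
  then show K: "2 \<le> K" using assms(2) by (simp add: numeral_eq_enat)
  show C: "cos_m a b = cos (pi / K)"
    using assms by (simp add: cos_m_def bil_coeff_def)
  have "cos (pi / K) < cos 0" using K by (subst cos_mono_less_eq) (simp_all add: field_simps)
  then show "cos_m a b < 1" using C by simp
  have "0 < pi / K" "pi / K \<le> pi / 2" using K by (simp_all add: field_simps)
  then show "0 \<le> cos_m a b" using C by (simp add: cos_ge_zero)
  show "0 < sin (pi / K)" using K by (intro sin_gt_zero) (simp_all add: field_simps)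
qed

lemma bform_alpha_two:
  "bform m (alpha c) (\<lambda>t. x * alpha p t + y * alpha q t) = x * bil_coeff m c p + y * bil_coeff m c q"
  by (simp add: bform_lin_right)

lemma act_alt_word_alpha:
  assumes "a \<noteq> b"
  shows "act (alt_word a b n) (alpha a) =
    (\<lambda>t. cheb (cos_m a b) (Suc n) * alpha (if even n then a else b) t
       + cheb (cos_m a b) n * alpha (if even n then b else a) t)"
proof (induction n)
  case (Suc n)
  let ?p = "if even n then a else b" and ?q = "if even n then b else a"
  have "bil_coeff m ?q ?p = - cos_m a b"
    using assms by (auto simp: cos_m_def bil_coeff_sym)
  then show ?case
    using Suc by (auto simp: refl_def bform_alpha_two algebra_simps)
qed (auto simp: alpha_def)

lemma braid_relation_alpha:
  assumes "a \<noteq> b" "m a b = enat K"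
  shows "act (alt_word a b K) (alpha a) = act (alt_word b a K) (alpha a)"
proof -
  note d = dihedral_order_enat[OF assms]
  obtain n where n: "K = Suc n" using d(1) by (cases K) auto
  have "act (alt_word b a K) (alpha a) = act (alt_word a b n) (srefl a (alpha a))"
    unfolding n alt_word_Suc_snoc by simp
  also have "\<dots> = (\<lambda>t. - act (alt_word a b n) (alpha a) t)"
    by (simp add: srefl_alpha_self act_uminus)
  finally show ?thesis
    using act_alt_word_alpha[OF assms(1), of K] act_alt_word_alpha[OF assms(1), of n]
      cheb_cos_pi_div[OF d(1)] d(2) n by auto
qed

lemma act_fix_perp:
  assumes "set ws \<subseteq> {a, b}" "bform m (alpha a) q = 0" "bform m (alpha b) q = 0"
  shows "act ws q = q"
  using assms by (induction ws) (auto simp: refl_def)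

lemma act_infinite_supp: "infinite (supp v) \<Longrightarrow> act ws v = v"
  by (induction ws) (auto simp: refl_infinite_supp)

lemma dihedral_plane_projection:
  assumes "a \<noteq> b" "m a b = enat K"
  obtains x y where "bform m (alpha a) (\<lambda>t. x * alpha a t + y * alpha b t) = bform m (alpha a) v"
    "bform m (alpha b) (\<lambda>t. x * alpha a t + y * alpha b t) = bform m (alpha b) v"
proof -
  note d = dihedral_order_enat[OF assms]
  define C where "C = cos_m a b"
  define x where "x = (bform m (alpha a) v + C * bform m (alpha b) v) / (1 - C * C)"
  define y where "y = (bform m (alpha b) v + C * bform m (alpha a) v) / (1 - C * C)"
  have "C * C < 1" using mult_strict_mono[of C 1 C 1] d(3,4) by (simp add: C_def)
  then have "1 - C * C \<noteq> 0" by simp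
  then have "x - C * y = bform m (alpha a) v" "y - C * x = bform m (alpha b) v"
    unfolding x_def y_def by (simp_all add: divide_simps) (simp_all add: algebra_simps)
  moreover have "bil_coeff m a b = - C" "bil_coeff m b a = - C"
    using assms by (simp_all add: C_def cos_m_def bil_coeff_sym)
  ultimately show ?thesis
    by (intro that[of x y]) (simp_all add: bform_alpha_two mult.commute)
qed

text \<open>The braid relation holds on \<open>alpha a\<close> and \<open>alpha b\<close>; since the form is nondegenerate on their
  span, every vector is the sum of a vector in the span and a vector orthogonal to it, which is
  fixed by both words.\<close>

lemma braid_relation:
  assumes "a \<noteq> b" "m a b = enat K"
  shows "act (alt_word a b K) = act (alt_word b a K)"
proof
  fix v
  show "act (alt_word a b K) v = act (alt_word b a K) v"
  proof (cases "finite (supp v)")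
    case fin: True
    obtain x y where xy: "bform m (alpha a) (\<lambda>t. x * alpha a t + y * alpha b t) = bform m (alpha a) v"
      "bform m (alpha b) (\<lambda>t. x * alpha a t + y * alpha b t) = bform m (alpha b) v"
      using dihedral_plane_projection[OF assms] by blast
    define p where "p = (\<lambda>t. x * alpha a t + y * alpha b t)"
    define q where "q = (\<lambda>t. v t - p t)"
    have fp: "finite (supp p)" by (simp add: p_def finite_subset[OF supp_lin_comb])
    have "bform m (alpha c) p = bform m (alpha c) v" if "c \<in> {a, b}" for c
      using xy that unfolding p_def by auto
    then have "bform m (alpha c) q = 0" if "c \<in> {a, b}" for c
      using that bform_lin_right[OF fin fp, of "alpha c" 1 "-1"] by (simp add: q_def)
    then have q_fixed: "act (alt_word a b K) q = q" "act (alt_word b a K) q = q"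
      using set_alt_word[of a b K] set_alt_word[of b a K]
      by (auto intro: act_fix_perp[of _ a b])
    have "supp q \<subseteq> supp v \<union> supp p" by (auto simp: q_def supp_def)
    then have fq: "finite (supp q)" using fin fp finite_subset by blast
    have v: "v = (\<lambda>t. 1 * p t + 1 * q t)" by (simp add: q_def)
    have "act (alt_word a b K) (alpha b) = act (alt_word b a K) (alpha b)"
      using braid_relation_alpha[of b a K] assms m_sym by auto
    with braid_relation_alpha[OF assms] have "act (alt_word a b K) p = act (alt_word b a K) p"
      by (simp add: p_def act_lin)
    moreover have "act ws v = (\<lambda>t. 1 * act ws p t + 1 * act ws q t)" for ws
      by (subst v) (rule act_lin[OF fp fq])
    ultimately show ?thesis by (simp add: q_fixed)
  qed (simp add: act_infinite_supp)
qed

end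

section \<open>Word length and the sign of roots\<close>

lemma not_distinct_adj_split: "\<not> distinct_adj us \<Longrightarrow> \<exists>xs c ys. us = xs @ c # c # ys"
proof (induction us)
  case (Cons a us)
  show ?case
  proof (cases "us \<noteq> [] \<and> a = hd us")
    case True
    then have "a # us = [] @ a # a # tl us" by simp
    then show ?thesis by blast
  next
    case False
    then obtain xs c ys where "us = xs @ c # c # ys"
      using Cons by (auto simp: distinct_adj_Cons)
    then have "a # us = (a # xs) @ c # c # ys" by simp
    then show ?thesis by blast
  qed
qed simp

lemma distinct_adj_two_letters:
  assumes "distinct_adj us" "set us \<subseteq> {a, b}" "us \<noteq> []" "last us = b" "a \<noteq> b"
  shows "us = alt_word a b (length us)"
  using assms
proof (induction us)
  case (Cons c us)
  show ?case
  proof (cases "us = []")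
    case False
    then obtain n where n: "length us = Suc n" by (cases us) auto
    have "us = alt_word a b (Suc n)"
      using Cons False n by (auto simp: distinct_adj_Cons)
    moreover have "c \<noteq> hd us" using Cons.prems(1) False by (simp add: distinct_adj_Cons)
    ultimately show ?thesis using Cons.prems(2) n by auto
  qed (use Cons in simp)
qed simp

abbreviation nonneg :: "('a \<Rightarrow> real) \<Rightarrow> bool" where
  "nonneg v \<equiv> \<forall>t. 0 \<le> v t"

context coxeter
begin

definition word_length :: "'a set \<Rightarrow> (('a \<Rightarrow> real) \<Rightarrow> ('a \<Rightarrow> real)) \<Rightarrow> nat" where
  "word_length A f = (LEAST n. \<exists>ws. set ws \<subseteq> A \<and> length ws = n \<and> act ws = f)"

abbreviation len :: "(('a \<Rightarrow> real) \<Rightarrow> ('a \<Rightarrow> real)) \<Rightarrow> nat" where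
  "len \<equiv> word_length UNIV"

lemma word_length_le: "set ws \<subseteq> A \<Longrightarrow> act ws = f \<Longrightarrow> word_length A f \<le> length ws"
  unfolding word_length_def by (rule Least_le) blast

lemma obtain_reduced_word:
  assumes "set ws \<subseteq> A" "act ws = f"
  obtains ws' where "set ws' \<subseteq> A" "length ws' = word_length A f" "act ws' = f"
  using LeastI_ex[of "\<lambda>n. \<exists>ws. set ws \<subseteq> A \<and> length ws = n \<and> act ws = f"] assms
  unfolding word_length_def by blast

lemma word_length_srefl_last:
  assumes "ws \<noteq> []" "set ws \<subseteq> A"
  shows "word_length A (act ws \<circ> srefl (last ws)) < length ws"
proof -
  have "act ws \<circ> srefl (last ws) = act (butlast ws)"
    using act_snoc_srefl[of "butlast ws" "last ws"] assms(1) by simp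
  then have "word_length A (act ws \<circ> srefl (last ws)) \<le> length (butlast ws)"
    using assms(2) in_set_butlastD by (intro word_length_le) fastforce+
  moreover have "length (butlast ws) < length ws" using assms(1) by simp
  ultimately show ?thesis by linarith
qed

lemma reduced_word_distinct_adj:
  assumes "set ws \<subseteq> A" "word_length A (act ws) = length ws"
  shows "distinct_adj ws"
proof (rule ccontr)
  assume "\<not> distinct_adj ws"
  then obtain xs c ys where ws: "ws = xs @ c # c # ys" by (blast dest: not_distinct_adj_split)
  then have "act ws = act (xs @ ys)" by (simp add: fun_eq_iff)
  then have "word_length A (act ws) \<le> length (xs @ ys)"
    using assms(1) ws by (intro word_length_le) auto
  then show False using assms(2) ws by simp
qed

lemma reduced_factorization_factors:
  assumes "act vs \<circ> act us = w" "length vs + length us = len w"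
  shows "len (act vs) = length vs" "set us \<subseteq> A \<Longrightarrow> word_length A (act us) = length us"
proof -
  obtain vs' where vs': "length vs' = len (act vs)" "act vs' = act vs"
    using obtain_reduced_word[of vs UNIV] by blast
  have "len w \<le> length (vs' @ us)" using assms(1) vs' by (intro word_length_le) auto
  then show "len (act vs) = length vs"
    using word_length_le[of vs UNIV] vs' assms(2) by simp
  assume "set us \<subseteq> A"
  then obtain us' where us': "set us' \<subseteq> A" "length us' = word_length A (act us)" "act us' = act us"
    using obtain_reduced_word by blast
  have "len w \<le> length (vs @ us')" using assms(1) us' by (intro word_length_le) auto
  then show "word_length A (act us) = length us"
    using word_length_le[OF \<open>set us \<subseteq> A\<close>] us' assms(2) by fastforce
qed

text \<open>For \<open>n \<ge> K\<close> the braid relation rewrites \<open>alt_word s t n\<close> into a word ending in \<open>s\<close>.\<close>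

lemma dihedral_reduced_length_less:
  assumes "s \<noteq> t" "m s t = enat K"
    and "n \<le> word_length {s, t} (act (alt_word s t n) \<circ> srefl s)"
  shows "n < K"
proof (rule ccontr)
  assume "\<not> n < K"
  then obtain j where n: "n = j + K" by (metis add.commute le_add_diff_inverse not_less)
  obtain k where k: "K = Suc k" using dihedral_order_enat(1)[OF assms(1,2)] by (cases K) auto
  define pre where "pre = take j (alt_word s t n)"
  have "drop j (alt_word s t n) = alt_word s t K" using drop_alt_word n by simp
  then have "alt_word s t n = pre @ alt_word s t K"
    unfolding pre_def by (metis append_take_drop_id)
  then have "act (alt_word s t n) \<circ> srefl s = act pre \<circ> (act (alt_word t s K) \<circ> srefl s)"
    by (simp add: braid_relation[OF assms(1,2)] comp_assoc)
  also have "act (alt_word t s K) \<circ> srefl s = act (alt_word s t k)"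
    unfolding k alt_word_Suc_snoc by (rule act_snoc_srefl)
  finally have "act (alt_word s t n) \<circ> srefl s = act (pre @ alt_word s t k)"
    by (simp only: act_append)
  moreover have "set (pre @ alt_word s t k) \<subseteq> {s, t}"
    using set_alt_word[of s t n] set_alt_word[of s t k] unfolding pre_def
    by (auto dest: in_set_takeD)
  ultimately have "word_length {s, t} (act (alt_word s t n) \<circ> srefl s) \<le> length (pre @ alt_word s t k)"
    by (intro word_length_le) auto
  then show False using assms(3) n k by (simp add: pre_def)
qed

lemma dihedral_act_alpha_nonneg:
  assumes "s \<noteq> t" "set us \<subseteq> {s, t}" "word_length {s, t} (act us) = length us"
    and "length us \<le> word_length {s, t} (act us \<circ> srefl s)"
  obtains x y where "0 \<le> x" "0 \<le> y" "act us (alpha s) = (\<lambda>u. x * alpha s u + y * alpha t u)"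
proof (cases "us = []")
  case True
  show ?thesis by (rule that[of 1 0]) (simp_all add: True)
next
  case False
  have "last us \<noteq> s"
    using word_length_srefl_last[OF False assms(2)] assms(4) by auto
  then have "last us = t" using False assms(2) last_in_set by blast
  define n where "n = length us"
  have "distinct_adj us" using reduced_word_distinct_adj assms(2,3) .
  then have us: "us = alt_word s t n"
    unfolding n_def by (rule distinct_adj_two_letters[OF _ assms(2) False \<open>last us = t\<close> assms(1)])
  have coeffs: "0 \<le> cheb (cos_m s t) (Suc n) \<and> 0 \<le> cheb (cos_m s t) n"
  proof (cases "m s t")
    case (enat K)
    have "n < K"
      using dihedral_reduced_length_less[OF assms(1) enat] assms(4) unfolding us by simp
    then show ?thesis
      using cheb_cos_pi_div_nonneg[of K] dihedral_order_enat(1,2)[OF assms(1) enat] by simp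
  qed (simp add: cos_m_infinity cheb_one)
  note formula = act_alt_word_alpha[OF assms(1), of n]
  show ?thesis
  proof (cases "even n")
    case True
    then show ?thesis using coeffs formula
      by (intro that[of "cheb (cos_m s t) (Suc n)" "cheb (cos_m s t) n"]) (simp_all add: us)
  next
    case False
    then show ?thesis using coeffs formula
      by (intro that[of "cheb (cos_m s t) n" "cheb (cos_m s t) (Suc n)"]) (simp_all add: us add.commute)
  qed
qed

lemma minimal_parabolic_factorization:
  assumes "set u0 \<subseteq> I" "act v0 \<circ> act u0 = w" "length v0 + length u0 = len w"
  obtains vs us where "set us \<subseteq> I" "act vs \<circ> act us = w" "length vs + length us = len w"
    "length vs \<le> length v0" "\<And>c. c \<in> I \<Longrightarrow> length vs \<le> len (act vs \<circ> srefl c)"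
proof -
  define P where "P = (\<lambda>(vs, us). set us \<subseteq> I \<and> act vs \<circ> act us = w \<and> length vs + length us = len w)"
  have "P (v0, u0)" using assms by (simp add: P_def)
  then obtain p where "P p" and p_min: "\<And>q. P q \<Longrightarrow> length (fst p) \<le> length (fst q)"
    using ex_has_least_nat[of P "(v0, u0)" "\<lambda>p. length (fst p)"] by blast
  obtain vs us where p: "p = (vs, us)" by fastforce
  have us: "set us \<subseteq> I" and w: "act vs \<circ> act us = w" and l: "length vs + length us = len w"
    using \<open>P p\<close> by (simp_all add: P_def p)
  have "length vs \<le> len (act vs \<circ> srefl c)" if "c \<in> I" for c
  proof (rule ccontr)
    assume short: "\<not> length vs \<le> len (act vs \<circ> srefl c)"
    obtain vs' where vs': "length vs' = len (act vs \<circ> srefl c)" "act vs' = act vs \<circ> srefl c"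
      using obtain_reduced_word[of "vs @ [c]" UNIV] by (auto simp: act_snoc)
    have w': "act vs' \<circ> act (c # us) = w" using vs'(2) w by (auto simp: fun_eq_iff)
    then have "len w \<le> length (vs' @ c # us)" by (intro word_length_le) auto
    then have "P (vs', c # us)" using w' us that short vs'(1) l unfolding P_def by auto
    then show False using p_min short vs'(1) by (fastforce simp: p)
  qed
  moreover have "length vs \<le> length v0" using p_min[of "(v0, u0)"] assms by (simp add: P_def p)
  ultimately show ?thesis using us w l that by blast
qed

lemma obtain_right_descent:
  assumes "0 < len (act ws)"
  obtains vs t where "act vs \<circ> act [t] = act ws" "length vs + length [t] = len (act ws)"
proof -
  obtain ws0 where ws0: "length ws0 = len (act ws)" "act ws0 = act ws"
    using obtain_reduced_word[of ws UNIV] by blast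
  then have "ws0 \<noteq> []" using assms by auto
  then have "butlast ws0 @ [last ws0] = ws0" by simp
  then show ?thesis using ws0 that[of "butlast ws0" "last ws0"] by (metis act_append length_append)
qed

lemma parabolic_factor_length_srefl:
  assumes "set us \<subseteq> I" "s \<in> I" "act vs \<circ> act us = w" "length vs + length us = len w"
    and "len w \<le> len (w \<circ> srefl s)"
  shows "length us \<le> word_length I (act us \<circ> srefl s)"
proof (rule ccontr)
  assume "\<not> ?thesis"
  moreover obtain us' where us': "set us' \<subseteq> I"
    "length us' = word_length I (act us \<circ> srefl s)" "act us' = act us \<circ> srefl s"
    using obtain_reduced_word[of "us @ [s]" I] assms(1,2) by (auto simp: act_snoc)
  moreover have "act (vs @ us') = w \<circ> srefl s" by (simp add: us'(3) comp_assoc flip: assms(3))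
  then have "len (w \<circ> srefl s) \<le> length (vs @ us')" by (intro word_length_le) auto
  ultimately show False using assms(4,5) by simp
qed

text \<open>The key step in the proof that every root is positive or negative
  (Humphreys, Reflection Groups and Coxeter Groups, Thm. 5.4): factor \<open>act ws = act vs \<circ> act us\<close>
  with \<open>us\<close> a word in \<open>s\<close> and a right descent \<open>t\<close>, and \<open>vs\<close> as short as possible; then induction
  applies to \<open>vs\<close> and the dihedral case to \<open>us\<close>.\<close>

lemma act_alpha_nonneg_if_length_le:
  assumes "len (act ws) \<le> len (act ws \<circ> srefl s)"
  shows "nonneg (act ws (alpha s))"
  using assms
proof (induction "len (act ws)" arbitrary: ws s rule: less_induct)
  case less
  show ?case
  proof (cases "len (act ws) = 0")
    case True
    obtain ws0 where "length ws0 = len (act ws)" "act ws0 = act ws"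
      using obtain_reduced_word[of ws UNIV] by blast
    then have "act ws = id" using True by simp
    then show ?thesis by (simp add: alpha_def)
  next
    case False
    then obtain vs0 t where desc: "act vs0 \<circ> act [t] = act ws"
      "length vs0 + length [t] = len (act ws)"
      using obtain_right_descent by blast
    have "act ws \<circ> srefl t = act vs0" by (metis act_append act_snoc_srefl desc(1))
    then have "len (act ws \<circ> srefl t) < len (act ws)"
      using word_length_le[of vs0 UNIV] desc(2) by simp
    then have "s \<noteq> t" using less.prems by auto
    obtain vs us where us: "set us \<subseteq> {s, t}" and w: "act vs \<circ> act us = act ws"
      and l: "length vs + length us = len (act ws)" and "length vs \<le> length vs0"
      and vs_min: "\<And>c. c \<in> {s, t} \<Longrightarrow> length vs \<le> len (act vs \<circ> srefl c)"
      by (rule minimal_parabolic_factorization[where I = "{s, t}", OF _ desc]) (simp_all add: that)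
    then have "length vs < len (act ws)" using desc(2) by simp
    moreover note reduced = reduced_factorization_factors[OF w l]
    ultimately have nonneg_vs: "nonneg (act vs (alpha c))" if "c \<in> {s, t}" for c
      using less.hyps[of vs c] vs_min[OF that] by simp
    have "length us \<le> word_length {s, t} (act us \<circ> srefl s)"
      using parabolic_factor_length_srefl[OF us _ w l less.prems] by simp
    then obtain x y where "0 \<le> x" "0 \<le> y"
      and xy: "act us (alpha s) = (\<lambda>u. x * alpha s u + y * alpha t u)"
      using dihedral_act_alpha_nonneg[OF \<open>s \<noteq> t\<close> us reduced(2)[OF us]] by blast
    have "act ws (alpha s) = act vs (\<lambda>u. x * alpha s u + y * alpha t u)"
      using w xy by (metis comp_apply)
    also have "\<dots> = (\<lambda>u. x * act vs (alpha s) u + y * act vs (alpha t) u)"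
      by (simp add: act_lin)
    finally show ?thesis using \<open>0 \<le> x\<close> \<open>0 \<le> y\<close> nonneg_vs by simp
  qed
qed

lemma root_nonneg_or_nonpos:
  assumes "\<gamma> \<in> roots m"
  shows "nonneg \<gamma> \<or> nonneg (\<lambda>t. - \<gamma> t)"
proof -
  obtain ws s where \<gamma>: "\<gamma> = act ws (alpha s)" using assms roots_iff_act by blast
  show ?thesis
  proof (cases "len (act ws) \<le> len (act ws \<circ> srefl s)")
    case True
    then show ?thesis using act_alpha_nonneg_if_length_le \<gamma> by blast
  next
    case False
    then have "len (act (ws @ [s])) \<le> len (act (ws @ [s]) \<circ> srefl s)"
      by (simp only: act_snoc_srefl) (simp add: fun_eq_iff)
    moreover have "act (ws @ [s]) (alpha s) = (\<lambda>t. - \<gamma> t)"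
      by (simp add: \<gamma> srefl_alpha_self act_uminus)
    ultimately show ?thesis using act_alpha_nonneg_if_length_le by metis
  qed
qed

lemma srefl_nonneg_root:
  assumes "\<beta> \<in> roots m" "nonneg \<beta>" "\<beta> \<noteq> alpha c"
  shows "nonneg (srefl c \<beta>)"
proof (rule ccontr)
  assume "\<not> nonneg (srefl c \<beta>)"
  then have nonpos: "nonneg (\<lambda>t. - srefl c \<beta> t)"
    using root_nonneg_or_nonpos[OF roots.step[OF assms(1)]] by blast
  have zero: "\<beta> t = 0" if "t \<noteq> c" for t
  proof -
    have "srefl c \<beta> t = \<beta> t" using that by (simp add: refl_apply_outside)
    then show ?thesis using nonpos assms(2) by (metis neg_0_le_iff_le order_antisym)
  qed
  then have supp: "supp \<beta> \<subseteq> {c}" by (auto simp: supp_def)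
  have "1 = bform m \<beta> \<beta>" using bform_root_self[OF assms(1)] by simp
  also have "\<dots> = (\<beta> c)\<^sup>2"
    using bform_eq_sum_left[of "{c}" \<beta>] bform_alpha_eq_sum[of "{c}" \<beta>] supp
    by (simp add: power2_eq_square)
  finally have "\<beta> c = 1" using assms(2)[rule_format, of c] by (auto simp: power2_eq_1_iff)
  then have "\<beta> = alpha c" using zero by (auto simp: fun_eq_iff alpha_def)
  then show False using assms(3) by simp
qed

end

section \<open>Positive roots orthogonal to a simple root\<close>

lemma cos_mult_pi_div_odd_neq_zero:
  fixes K n :: nat
  assumes "odd K" "n \<le> K"
  shows "cos (real n * (pi / K)) \<noteq> 0"
proof
  assume cos0: "cos (real n * (pi / K)) = 0"
  have K: "0 < real K" using assms(1) by (cases K) auto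
  have "real n * (pi / K) \<le> real K * (pi / K)"
    using assms(2) by (intro mult_right_mono) simp_all
  then have "real n * (pi / K) \<le> pi" using K by simp
  then have "real n * (pi / K) = pi / 2"
    by (intro cos_inj_pi[where y = "pi / 2"]) (use cos0 in simp_all)
  then have "real K = real (2 * n)" using K by (simp add: field_simps)
  then show False using assms(1) by (metis dvd_triv_left of_nat_eq_iff)
qed

lemma pos_comb_supp_subset:
  assumes "finite I" "\<forall>i\<in>I. 0 < k i \<and> nonneg (g i)" "i \<in> I"
  shows "supp (g i) \<subseteq> supp (\<lambda>t. \<Sum>i\<in>I. k i * g i t)"
proof
  fix t assume "t \<in> supp (g i)"
  then have "0 < k i * g i t" using assms(2,3) by (auto simp: supp_def less_le)
  moreover have "k i * g i t \<le> (\<Sum>i\<in>I. k i * g i t)"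
    using assms by (intro member_le_sum) (auto intro: mult_nonneg_nonneg less_imp_le)
  ultimately show "t \<in> supp (\<lambda>t. \<Sum>i\<in>I. k i * g i t)" by (auto simp: supp_def)
qed

context coxeter
begin

abbreviation pos_perp :: "'a \<Rightarrow> ('a \<Rightarrow> real) set" where
  "pos_perp z \<equiv> perp_roots m UNIV z \<inter> pos_roots m"

lemma mem_perp_roots_UNIV [simp]:
  "\<beta> \<in> perp_roots m UNIV z \<longleftrightarrow> \<beta> \<in> roots m \<and> bform m \<beta> (alpha z) = 0"
  by (simp add: perp_roots_def roots_on_def)

lemma mem_pos_roots [simp]: "\<beta> \<in> pos_roots m \<longleftrightarrow> \<beta> \<in> roots m \<and> nonneg \<beta>"
  by (simp add: pos_roots_def)

text \<open>Positivity survives each letter of \<open>alt_word a b (K - 1)\<close>: the intermediate image of a root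
  orthogonal to \<open>alpha a\<close> is never a simple root, as \<open>cos (j * pi / K) \<noteq> 0\<close> for odd \<open>K\<close>.\<close>

lemma act_alt_word_pos_perp_nonneg:
  assumes "a \<noteq> b" "m a b = enat K" "odd K" "\<beta> \<in> pos_perp a" "j < K"
  shows "nonneg (act (alt_word a b j) \<beta>)"
  using assms(5)
proof (induction j)
  case 0
  then show ?case using assms(4) by simp
next
  case (Suc j)
  note d = dihedral_order_enat[OF assms(1,2)]
  have \<beta>: "\<beta> \<in> roots m" "bform m \<beta> (alpha a) = 0" using assms(4) by simp_all
  let ?p = "if even j then a else b" and ?q = "if even j then b else a"
  have "act (alt_word a b j) \<beta> \<noteq> alpha ?q"
  proof
    assume eq: "act (alt_word a b j) \<beta> = alpha ?q"
    have "0 = bform m (act (alt_word a b j) \<beta>) (act (alt_word a b j) (alpha a))"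
      using \<beta> by (simp add: bform_act finite_supp_root)
    also have "\<dots> = cheb (cos_m a b) j - cos_m a b * cheb (cos_m a b) (Suc j)"
      using assms(1) unfolding eq act_alt_word_alpha[OF assms(1)]
      by (auto simp: bform_alpha_two cos_m_def bil_coeff_sym)
    also have "\<dots> = - cos (real (Suc j) * (pi / K))"
      using cheb_cos_perp[of "pi / K" j] d(2,5) by simp
    finally show False
      using cos_mult_pi_div_odd_neq_zero[OF assms(3), of "Suc j"] Suc.prems by simp
  qed
  then show ?case
    using srefl_nonneg_root[OF act_root[OF \<beta>(1)]] Suc by simp
qed

lemma odd_edge_transport:
  assumes "a \<noteq> b" "m a b = enat K" "odd K"
  shows "act (alt_word a b (K - 1)) (alpha a) = alpha b"
    and "act (alt_word a b (K - 1)) ` pos_perp a \<subseteq> pos_perp b"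
proof -
  note d = dihedral_order_enat[OF assms(1,2)]
  obtain k where k: "K = Suc k" "even k" using d(1) assms(3) by (cases K) auto
  show e: "act (alt_word a b (K - 1)) (alpha a) = alpha b"
    using act_alt_word_alpha[OF assms(1), of k] cheb_cos_pi_div[OF d(1)] d(2) k
    by (simp add: alpha_def)
  show "act (alt_word a b (K - 1)) ` pos_perp a \<subseteq> pos_perp b"
  proof
    fix \<beta>' assume "\<beta>' \<in> act (alt_word a b (K - 1)) ` pos_perp a"
    then obtain \<beta> where \<beta>': "\<beta>' = act (alt_word a b (K - 1)) \<beta>" and \<beta>: "\<beta> \<in> pos_perp a"
      by blast
    have "nonneg \<beta>'" using act_alt_word_pos_perp_nonneg[OF assms \<beta>] \<beta>' k by simp
    moreover have "bform m \<beta>' (alpha b) = 0"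
      using bform_act[of \<beta> "alpha a" "alt_word a b (K - 1)"] \<beta> e \<beta>' by (simp add: finite_supp_root)
    ultimately show "\<beta>' \<in> pos_perp b" using \<beta>' \<beta> act_root by simp
  qed
qed

lemma odd_edge_transport_image:
  assumes "a \<noteq> b" "m a b = enat K" "odd K"
  shows "act (alt_word a b (K - 1)) ` pos_perp a = pos_perp b"
proof
  show "act (alt_word a b (K - 1)) ` pos_perp a \<subseteq> pos_perp b"
    by (rule odd_edge_transport(2)[OF assms])
  show "pos_perp b \<subseteq> act (alt_word a b (K - 1)) ` pos_perp a"
  proof
    fix \<beta> assume "\<beta> \<in> pos_perp b"
    moreover have "rev (alt_word a b (K - 1)) = alt_word b a (K - 1)"
      using assms(3) by (simp add: rev_alt_word)
    moreover have "act (alt_word b a (K - 1)) ` pos_perp b \<subseteq> pos_perp a"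
      using odd_edge_transport(2)[of b a K] assms m_sym by simp
    ultimately show "\<beta> \<in> act (alt_word a b (K - 1)) ` pos_perp a"
      by (metis act_act_rev image_eqI image_subset_iff)
  qed
qed

lemma odd_component_transport:
  assumes "(odd_edge m)\<^sup>*\<^sup>* x y"
  shows "\<exists>ws. set ws \<subseteq> odd_component m x \<and> act ws (alpha x) = alpha y
    \<and> act ws ` pos_perp x = pos_perp y"
  using assms
proof (induction rule: rtranclp_induct)
  case base
  show ?case by (rule exI[of _ "[]"]) simp
next
  case (step y z)
  then obtain ws where ws: "set ws \<subseteq> odd_component m x" "act ws (alpha x) = alpha y"
    "act ws ` pos_perp x = pos_perp y" by blast
  from step(2) obtain K where yz: "y \<noteq> z" "m y z = enat K" "odd K"
    by (auto simp: odd_edge_def)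
  let ?u = "alt_word y z (K - 1)"
  have "y \<in> odd_component m x" "z \<in> odd_component m x"
    using step(1,2) by (simp_all add: odd_component_def)
  then have "set (?u @ ws) \<subseteq> odd_component m x" using ws(1) set_alt_word[of y z "K - 1"] by auto
  moreover have "act (?u @ ws) (alpha x) = alpha z" using ws(2) odd_edge_transport(1)[OF yz] by simp
  moreover have "act (?u @ ws) ` pos_perp x = pos_perp z"
    by (simp only: act_append image_comp[symmetric] ws(3) odd_edge_transport_image[OF yz])
  ultimately show ?case by blast
qed

lemma dihedral_root:
  assumes "a \<noteq> b"
  shows "(\<lambda>t. cheb (cos_m a b) (Suc n) * alpha a t + cheb (cos_m a b) n * alpha b t) \<in> roots m"
proof (cases "even n")
  case True
  then have "act (alt_word a b n) (alpha a)
      = (\<lambda>t. cheb (cos_m a b) (Suc n) * alpha a t + cheb (cos_m a b) n * alpha b t)"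
    using act_alt_word_alpha[OF assms] by simp
  then show ?thesis using roots_iff_act by metis
next
  case False
  then have "act (alt_word b a n) (alpha b)
      = (\<lambda>t. cheb (cos_m a b) (Suc n) * alpha a t + cheb (cos_m a b) n * alpha b t)"
    using act_alt_word_alpha[of b a n] assms by (simp add: cos_m_sym)
  then show ?thesis using roots_iff_act by metis
qed

lemma even_edge_perp_root:
  assumes "y \<noteq> s" "m y s = enat K" "even K"
  obtains \<beta> where "\<beta> \<in> pos_perp y" "0 < \<beta> s" "supp \<beta> \<subseteq> {y, s}"
proof -
  note d = dihedral_order_enat[OF assms(1,2)]
  define C where "C = cos_m y s"
  obtain n where n: "K = 2 * Suc n" using assms(3) d(1)
    by (metis evenE Suc_pred' not_gr0 not_numeral_le_zero mult_0_right)
  have half: "real (Suc n) * (pi / K) = pi / 2" using n by (simp add: field_simps)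
  define \<beta> where "\<beta> = (\<lambda>t. cheb C (Suc n) * alpha s t + cheb C n * alpha y t)"
  have "\<beta> \<in> roots m" using dihedral_root[of s y n] assms(1) by (simp add: \<beta>_def C_def cos_m_sym)
  moreover have "0 \<le> cheb C n" "0 \<le> cheb C (Suc n)"
    using cheb_cos_pi_div_nonneg[OF d(1)] d(2) n unfolding C_def by simp_all
  moreover have "0 < cheb C (Suc n)"
  proof -
    have "cheb C (Suc n) * sin (pi / K) = sin (real (Suc n) * (pi / K))"
      by (simp only: C_def d(2) cheb_cos_mult_sin)
    also have "\<dots> = 1" unfolding half by simp
    finally show ?thesis using d(5) \<open>0 \<le> cheb C (Suc n)\<close> by (cases "cheb C (Suc n) = 0") auto
  qed
  moreover have "bform m \<beta> (alpha y) = 0"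
  proof -
    have "bform m \<beta> (alpha y) = bform m (alpha y) \<beta>" by (rule bform_sym)
    also have "\<dots> = cheb C n - C * cheb C (Suc n)"
      using assms(1) by (simp add: \<beta>_def bform_alpha_two C_def cos_m_def)
    also have "\<dots> = 0"
      using cheb_cos_perp[of "pi / K" n] d(5) unfolding C_def d(2) half by simp
    finally show ?thesis .
  qed
  ultimately show ?thesis
    using assms(1) by (intro that[of \<beta>]) (auto simp: \<beta>_def supp_def alpha_def)
qed

lemma dihedral_perp_root_coords:
  assumes "y \<noteq> s" "\<beta> \<in> pos_perp y" "supp \<beta> \<subseteq> {y, s}"
  shows "\<beta> y = cos_m y s * \<beta> s" "(\<beta> s)\<^sup>2 * (1 - (cos_m y s)\<^sup>2) = 1"
proof -
  let ?C = "cos_m y s"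
  have \<beta>: "\<beta> \<in> roots m" "bform m \<beta> (alpha y) = 0" using assms(2) by simp_all
  have sum: "bform m (alpha c) \<beta> = \<beta> y * bil_coeff m c y + \<beta> s * bil_coeff m c s" for c
    using bform_alpha_eq_sum[where A = "{y, s}" and v = \<beta> and m = m and c = c] assms(1,3) by simp
  have perp: "bform m (alpha y) \<beta> = 0" using \<beta>(2) by (simp add: bform_sym)
  then show y: "\<beta> y = ?C * \<beta> s"
    using sum[of y] unfolding cos_m_def by (simp add: eq_neg_iff_add_eq_0 mult.commute)
  have "1 = bform m \<beta> \<beta>" using bform_root_self[OF \<beta>(1)] by simp
  also have "\<dots> = \<beta> y * bform m (alpha y) \<beta> + \<beta> s * bform m (alpha s) \<beta>"
    using bform_eq_sum_left[where A = "{y, s}" and u = \<beta> and v = \<beta> and m = m] assms(1,3) by simp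
  also have "\<dots> = \<beta> s * (\<beta> s - ?C * \<beta> y)"
    using perp sum[of s] by (simp add: cos_m_def bil_coeff_sym)
  finally show "(\<beta> s)\<^sup>2 * (1 - ?C\<^sup>2) = 1" using y by (simp add: power2_eq_square algebra_simps)
qed

lemma dihedral_perp_root_unique:
  assumes "y \<noteq> s" "m y s = enat K"
    and "\<beta> \<in> pos_perp y" "supp \<beta> \<subseteq> {y, s}" "\<beta>' \<in> pos_perp y" "supp \<beta>' \<subseteq> {y, s}"
  shows "\<beta> = \<beta>'"
proof -
  note d = dihedral_order_enat[OF assms(1,2)]
  note c = dihedral_perp_root_coords[OF assms(1,3,4)] and c' = dihedral_perp_root_coords[OF assms(1,5,6)]
  have "(cos_m y s)\<^sup>2 < 1" using d(3,4) by (simp add: abs_square_less_1)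
  then have "1 - (cos_m y s)\<^sup>2 \<noteq> 0" by simp
  then have "(\<beta> s)\<^sup>2 = (\<beta>' s)\<^sup>2" using c(2) c'(2) by (metis mult_right_cancel)
  moreover have "0 \<le> \<beta> s" "0 \<le> \<beta>' s" using assms(3,5) by simp_all
  ultimately have s: "\<beta> s = \<beta>' s" by simp
  show ?thesis
  proof
    fix t
    show "\<beta> t = \<beta>' t"
    proof (cases "t \<in> {y, s}")
      case False
      then have "t \<notin> supp \<beta>" "t \<notin> supp \<beta>'" using assms(4,6) by auto
      then show ?thesis by (simp add: supp_def)
    qed (use s c(1) c'(1) in auto)
  qed
qed

lemma act_preimage_not_pos_comb:
  assumes "act ws ` pos_perp x = pos_perp y" "\<gamma> \<in> pos_perp x"
    and unique: "\<And>\<beta>. \<beta> \<in> pos_perp y \<Longrightarrow> supp \<beta> \<subseteq> supp (act ws \<gamma>) \<Longrightarrow> \<beta> = act ws \<gamma>"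
  shows "\<not> pos_comb_of_two (pos_perp x) \<gamma>"
proof
  assume "pos_comb_of_two (pos_perp x) \<gamma>"
  then obtain F c where F: "finite F" "F \<subseteq> pos_perp x" "2 \<le> card F" "\<forall>\<beta>\<in>F. 0 < c \<beta>"
    and \<gamma>: "\<gamma> = (\<lambda>t. \<Sum>\<beta>\<in>F. c \<beta> * \<beta> t)"
    unfolding pos_comb_of_two_def by blast
  have "\<beta> \<in> roots m" if "\<beta> \<in> F" for \<beta> using F(2) that by auto
  then have "act ws \<gamma> = (\<lambda>t. \<Sum>\<beta>\<in>F. c \<beta> * act ws \<beta> t)"
    unfolding \<gamma> by (intro act_sum F(1) finite_supp_root)
  moreover have img: "act ws \<beta> \<in> pos_perp y" if "\<beta> \<in> F" for \<beta>
    using assms(1) F(2) that by blast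
  ultimately have "supp (act ws \<beta>) \<subseteq> supp (act ws \<gamma>)" if "\<beta> \<in> F" for \<beta>
    using pos_comb_supp_subset[OF F(1), of c "act ws"] F(4) that by auto
  then have "\<beta> = \<gamma>" if "\<beta> \<in> F" for \<beta>
    using unique[OF img] that by (blast intro: act_inj)
  then have "card F \<le> card {\<gamma>}" using F(1) by (intro card_mono) auto
  then show False using F(3) by simp
qed

lemma Pi_perp_root_with_supp:
  assumes "s \<notin> odd_component m x" "y \<in> odd_component m x" "m y s < \<infinity>"
  obtains \<gamma> where "\<gamma> \<in> Pi_perp m UNIV x" "s \<in> supp \<gamma>"
proof -
  obtain K where K: "m y s = enat K" using assms(3) by (cases "m y s") auto
  have "y \<noteq> s" using assms(1,2) by auto
  have "even K"
  proof (rule ccontr)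
    assume "odd K"
    moreover have "2 \<le> K" using dihedral_order_enat(1)[OF \<open>y \<noteq> s\<close> K] .
    ultimately have "odd_edge m y s" using K \<open>y \<noteq> s\<close> by (auto simp: odd_edge_def elim!: oddE)
    then have "s \<in> odd_component m x" using assms(2) by (simp add: odd_component_def)
    with assms(1) show False by simp
  qed
  obtain \<beta>0 where \<beta>0: "\<beta>0 \<in> pos_perp y" "0 < \<beta>0 s" "supp \<beta>0 \<subseteq> {y, s}"
    using even_edge_perp_root[OF \<open>y \<noteq> s\<close> K \<open>even K\<close>] by blast
  have "(odd_edge m)\<^sup>*\<^sup>* x y" using assms(2) by (simp add: odd_component_def)
  then obtain ws where ws: "set ws \<subseteq> odd_component m x" "act ws ` pos_perp x = pos_perp y"
    using odd_component_transport by blast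
  then obtain \<gamma> where \<gamma>: "\<gamma> \<in> pos_perp x" "act ws \<gamma> = \<beta>0" using \<beta>0(1) by (metis imageE)
  have not_comb: "\<not> pos_comb_of_two (pos_perp x) \<gamma>"
  proof (rule act_preimage_not_pos_comb[OF ws(2) \<gamma>(1)])
    fix \<beta> assume "\<beta> \<in> pos_perp y" "supp \<beta> \<subseteq> supp (act ws \<gamma>)"
    then show "\<beta> = act ws \<gamma>"
      using dihedral_perp_root_unique[OF \<open>y \<noteq> s\<close> K _ _ \<beta>0(1,3)] \<gamma>(2) \<beta>0(3) by blast
  qed
  have "s \<notin> set ws" using ws(1) assms(1) by blast
  then have "\<gamma> s = \<beta>0 s" using act_apply_outside \<gamma>(2) by metis
  with \<beta>0(2) have "s \<in> supp \<gamma>" by (simp add: supp_def)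
  moreover have "\<gamma> \<in> Pi_perp m UNIV x" using not_comb \<gamma>(1) by (simp add: Pi_perp_def)
  ultimately show ?thesis using that by blast
qed

lemma refl_in_R_perp_diff:
  assumes "\<gamma> \<in> Pi_perp m J x" "\<not> supp \<gamma> \<subseteq> I"
  shows "refl m \<gamma> \<in> R_perp m J x - R_perp m I x"
proof -
  have "\<gamma> \<in> roots m" using assms(1) by (simp add: Pi_perp_def perp_roots_def roots_on_def)
  have "supp \<gamma> \<subseteq> supp \<gamma>'" if "\<gamma>' \<in> Pi_perp m I x" "refl m \<gamma> = refl m \<gamma>'" for \<gamma>'
    using supp_root_subset_if_refl_eq[OF \<open>\<gamma> \<in> roots m\<close>] that(2) by simp
  moreover have "supp \<gamma>' \<subseteq> I" if "\<gamma>' \<in> Pi_perp m I x" for \<gamma>'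
    using that by (simp add: Pi_perp_def perp_roots_def roots_on_def)
  ultimately show ?thesis using assms by (auto simp: R_perp_def)
qed

end

theorem corollary4p10:
  fixes m :: "'a \<Rightarrow> 'a \<Rightarrow> enat" and x :: 'a
  assumes "coxeter_matrix m"
    and "finite (R_perp m UNIV x - R_perp m (odd_component m x) x)"
  shows "finite {s. s \<notin> odd_component m x \<and> (\<exists>y \<in> odd_component m x. m y s < \<infinity>)}"
proof -
  interpret coxeter m by (rule coxeter.intro) (rule assms(1))
  let ?R = "R_perp m UNIV x - R_perp m (odd_component m x) x"
  let ?root = "inv_into (Pi_perp m UNIV x) (refl m)"
  have root: "?root \<rho> \<in> Pi_perp m UNIV x" "refl m (?root \<rho>) = \<rho>" if "\<rho> \<in> ?R" for \<rho>
    using that by (auto simp: R_perp_def inv_into_into f_inv_into_f)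
  have "{s. s \<notin> odd_component m x \<and> (\<exists>y \<in> odd_component m x. m y s < \<infinity>)} \<subseteq> (\<Union>\<rho>\<in>?R. supp (?root \<rho>))"
  proof safe
    fix s y assume "s \<notin> odd_component m x" "y \<in> odd_component m x" "m y s < \<infinity>"
    then obtain \<gamma> where \<gamma>: "\<gamma> \<in> Pi_perp m UNIV x" "s \<in> supp \<gamma>" by (rule Pi_perp_root_with_supp)
    then have "refl m \<gamma> \<in> ?R" using \<open>s \<notin> odd_component m x\<close> by (intro refl_in_R_perp_diff) auto
    moreover have "\<gamma> \<in> roots m" using \<gamma>(1) by (simp add: Pi_perp_def perp_roots_def roots_on_def)
    ultimately show "s \<in> (\<Union>\<rho>\<in>?R. supp (?root \<rho>))"
      using supp_root_subset_if_refl_eq root \<gamma>(2) by blast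
  qed
  moreover have "finite (\<Union>\<rho>\<in>?R. supp (?root \<rho>))"
    using assms(2) root(1) by (auto simp: Pi_perp_def perp_roots_def roots_on_def intro: finite_supp_root)
  ultimately show ?thesis by (rule finite_subset)
qed

end
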